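(* Every NSS topological group is TAP.
   Context: Topological groups are Hausdorff. A topological group is NSS if some open neighborhood of the identity contains no nontrivial subgroup. A subset $A$ of a topological group $G$ is absolutely productive in $G$ if for every injection $a:\mathbb{N}\to A$ and every map $z:\mathbb{N}\to\mathbb{Z}$ the sequence $\left(\prod_{n=0}^{k}a(n)^{z(n)}\right)_{k\in\mathbb{N}}$ converges to some element of $G$. $G$ is TAP if every absolutely productive subset of $G$ is finite. *)

theory Defs
  imports "HOL-Analysis.Analysis"
begin

text \<open>Topological groups are modelled as types of class
  topological_group_add (a possibly non-abelian group, written additively, with
  jointly continuous addition and continuous inversion) together with t2_space
  (Hausdorff).\<close>

definition zmult :: "int \<Rightarrow> 'a::group_add \<Rightarrow> 'a" where
  "zmult z g = (if 0 \<le> z then ((\<lambda>x. x + g) ^^ nat z) 0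
                else - (((\<lambda>x. x + g) ^^ nat (- z)) 0))"

definition partial_prod :: "(nat \<Rightarrow> 'a::group_add) \<Rightarrow> (nat \<Rightarrow> int) \<Rightarrow> nat \<Rightarrow> 'a" where
  "partial_prod a z k = sum_list (map (\<lambda>n. zmult (z n) (a n)) [0..<Suc k])"

definition is_subgroup :: "'a::group_add set \<Rightarrow> bool" where
  "is_subgroup H \<longleftrightarrow> 0 \<in> H \<and> (\<forall>x\<in>H. \<forall>y\<in>H. x + y \<in> H) \<and> (\<forall>x\<in>H. - x \<in> H)"

definition NSS :: "'a::{topological_group_add, t2_space} itself \<Rightarrow> bool" where
  "NSS _ \<longleftrightarrow> (\<exists>U::'a set. open U \<and> 0 \<in> U \<and>
      (\<forall>H. is_subgroup H \<and> H \<subseteq> U \<longrightarrow> H = {0}))"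

definition absolutely_productive :: "'a::{topological_group_add, t2_space} set \<Rightarrow> bool" where
  "absolutely_productive A \<longleftrightarrow>
     (\<forall>a::nat \<Rightarrow> 'a. \<forall>z::nat \<Rightarrow> int. inj a \<and> range a \<subseteq> A \<longrightarrow>
        (\<exists>g. partial_prod a z \<longlonglongrightarrow> g))"

definition TAP :: "'a::{topological_group_add, t2_space} itself \<Rightarrow> bool" where
  "TAP _ \<longleftrightarrow> (\<forall>A::'a set. absolutely_productive A \<longrightarrow> finite A)"

end

theory Submission
  imports Defs
begin

text \<open>An NSS neighbourhood U of 0 contains no nontrivial cyclic subgroup, so every x \<noteq> 0 has an
  integer multiple outside U. Given an injective sequence a of nonzero elements of A, choose the
  exponents z n so that every factor a(n)^z(n) lies outside U. If the partial products converged,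
  their consecutive quotients, which are exactly these factors, would tend to 0 and hence
  eventually lie in U.\<close>

definition nmult :: "nat \<Rightarrow> 'a::monoid_add \<Rightarrow> 'a" where
  "nmult n x = ((\<lambda>y. y + x) ^^ n) 0"

lemma nmult_0 [simp]: "nmult 0 x = 0"
  by (simp add: nmult_def)

lemma nmult_1 [simp]: "nmult 1 x = x"
  by (simp add: nmult_def)

lemma nmult_add: "nmult (m + n) x = nmult m x + nmult n x"
  by (induction n) (simp_all add: nmult_def add.assoc)

lemma zmult_of_nat: "zmult (int n) x = nmult n x"
  by (simp add: zmult_def nmult_def)

lemma zmult_minus_of_nat: "zmult (- int n) x = - nmult n x"
  unfolding zmult_def nmult_def by (cases "n = 0") simp_all

lemma range_zmult: "range (\<lambda>w. zmult w x) = range (\<lambda>n. nmult n x) \<union> range (\<lambda>n. - nmult n x)"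
proof -
  have "zmult w x \<in> range (\<lambda>n. nmult n x) \<union> range (\<lambda>n. - nmult n x)" for w
    by (cases w rule: int_cases) (auto simp: zmult_of_nat zmult_minus_of_nat simp del: of_nat_Suc)
  moreover have "nmult n x \<in> range (\<lambda>w. zmult w x)" "- nmult n x \<in> range (\<lambda>w. zmult w x)" for n
    by (metis rangeI zmult_of_nat, metis rangeI zmult_minus_of_nat)
  ultimately show ?thesis by blast
qed

text \<open>Splitting the larger multiple on the appropriate side avoids any commutation argument.\<close>

lemma nmult_diff_mem_range_zmult: "nmult m x - nmult n x \<in> range (\<lambda>w. zmult w x)"
proof (cases "n \<le> m")
  case True
  then have "nmult m x = nmult (m - n) x + nmult n x" by (simp flip: nmult_add)
  then have "nmult m x - nmult n x = zmult (int (m - n)) x" by (simp add: zmult_of_nat)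
  then show ?thesis by (metis rangeI)
next
  case False
  then have "nmult n x = nmult (n - m) x + nmult m x" by (simp flip: nmult_add)
  then have "nmult m x - nmult n x = zmult (- int (n - m)) x"
    by (simp add: zmult_minus_of_nat diff_add_eq_diff_diff_swap)
  then show ?thesis by (metis rangeI)
qed

lemma minus_nmult_add_mem_range_zmult: "- nmult m x + nmult n x \<in> range (\<lambda>w. zmult w x)"
proof (cases "m \<le> n")
  case True
  then have "nmult n x = nmult m x + nmult (n - m) x" by (simp flip: nmult_add)
  then have "- nmult m x + nmult n x = zmult (int (n - m)) x"
    by (simp add: zmult_of_nat add.assoc[symmetric])
  then show ?thesis by (metis rangeI)
next
  case False
  then have "nmult m x = nmult n x + nmult (m - n) x" by (simp flip: nmult_add)
  then have "- nmult m x + nmult n x = zmult (- int (m - n)) x"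
    by (simp add: zmult_minus_of_nat minus_add add.assoc)
  then show ?thesis by (metis rangeI)
qed

lemma is_subgroup_range_zmult: "is_subgroup (range (\<lambda>w. zmult w (x::'a::group_add)))"
  unfolding is_subgroup_def range_zmult
proof (intro conjI ballI)
  show "0 \<in> range (\<lambda>n. nmult n x) \<union> range (\<lambda>n. - nmult n x)"
    by (metis UnI1 nmult_0 rangeI)
next
  fix u
  assume "u \<in> range (\<lambda>n. nmult n x) \<union> range (\<lambda>n. - nmult n x)"
  then show "- u \<in> range (\<lambda>n. nmult n x) \<union> range (\<lambda>n. - nmult n x)"
    by auto
next
  fix u v
  assume "u \<in> range (\<lambda>n. nmult n x) \<union> range (\<lambda>n. - nmult n x)"
    and "v \<in> range (\<lambda>n. nmult n x) \<union> range (\<lambda>n. - nmult n x)"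
  then show "u + v \<in> range (\<lambda>n. nmult n x) \<union> range (\<lambda>n. - nmult n x)"
  proof (elim UnE rangeE)
    fix m n assume "u = nmult m x" "v = nmult n x"
    then show ?thesis by (metis UnI1 rangeI nmult_add)
  next
    fix m n assume "u = nmult m x" "v = - nmult n x"
    then have "u + v = nmult m x - nmult n x" by simp
    with nmult_diff_mem_range_zmult[of m x n] show ?thesis by (simp only: range_zmult)
  next
    fix m n assume "u = - nmult m x" "v = nmult n x"
    then have "u + v = - nmult m x + nmult n x" by simp
    with minus_nmult_add_mem_range_zmult[of m x n] show ?thesis by (simp only: range_zmult)
  next
    fix m n assume "u = - nmult m x" "v = - nmult n x"
    then have "u + v = - nmult (n + m) x" by (simp only: nmult_add minus_add)
    then show ?thesis by (metis UnI2 rangeI)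
  qed
qed

lemma ex_zmult_notin_subgroup_free:
  fixes x :: "'a::group_add"
  assumes "\<forall>H. is_subgroup H \<and> H \<subseteq> U \<longrightarrow> H = {0}" and "x \<noteq> 0"
  shows "\<exists>w. zmult w x \<notin> U"
proof (rule ccontr)
  assume "\<nexists>w. zmult w x \<notin> U"
  then have "range (\<lambda>w. zmult w x) = {0}"
    using assms(1) is_subgroup_range_zmult by blast
  moreover have "x \<in> range (\<lambda>w. zmult w x)"
    using zmult_of_nat[of 1 x] by (metis nmult_1 of_nat_1 rangeI)
  ultimately show False using assms(2) by blast
qed

lemma partial_prod_Suc:
  "partial_prod a z (Suc k) = partial_prod a z k + zmult (z (Suc k)) (a (Suc k))"
  by (simp add: partial_prod_def add.assoc)

lemma convergent_partial_prod_factors_tendsto_0: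
  fixes a :: "nat \<Rightarrow> 'a::topological_group_add"
  assumes "partial_prod a z \<longlonglongrightarrow> g"
  shows "(\<lambda>n. zmult (z n) (a n)) \<longlonglongrightarrow> 0"
proof -
  have "(\<lambda>k. - partial_prod a z k + partial_prod a z (Suc k)) \<longlonglongrightarrow> - g + g"
    by (intro tendsto_add tendsto_minus assms LIMSEQ_Suc)
  then have "(\<lambda>k. zmult (z (Suc k)) (a (Suc k))) \<longlonglongrightarrow> 0"
    by (simp add: partial_prod_Suc add.assoc[symmetric])
  then show ?thesis by (rule LIMSEQ_imp_Suc)
qed

theorem theorem4p9:
  assumes "NSS TYPE('a::{topological_group_add, t2_space})"
  shows "TAP TYPE('a)"
  unfolding TAP_def
proof (intro allI impI, rule ccontr)
  fix A :: "'a set"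
  assume productive: "absolutely_productive A" and "infinite A"
  obtain U :: "'a set" where U: "open U" "0 \<in> U" "\<forall>H. is_subgroup H \<and> H \<subseteq> U \<longrightarrow> H = {0}"
    using assms unfolding NSS_def by (elim exE conjE) (rule that)
  have "infinite (A - {0})" using \<open>infinite A\<close> by simp
  then obtain a :: "nat \<Rightarrow> 'a" where a: "inj a" "range a \<subseteq> A - {0}"
    using infinite_countable_subset by blast
  define z where "z n = (SOME w. zmult w (a n) \<notin> U)" for n
  have "a n \<noteq> 0" for n using a(2) by auto
  then have outside: "zmult (z n) (a n) \<notin> U" for n
    unfolding z_def by (rule someI_ex[OF ex_zmult_notin_subgroup_free[OF U(3)]])
  obtain g where "partial_prod a z \<longlonglongrightarrow> g"
    using productive a unfolding absolutely_productive_def by blast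
  then have "(\<lambda>n. zmult (z n) (a n)) \<longlonglongrightarrow> 0"
    by (rule convergent_partial_prod_factors_tendsto_0)
  then have "eventually (\<lambda>n. zmult (z n) (a n) \<in> U) sequentially"
    using U(1,2) by (rule topological_tendstoD)
  then show False using outside by (simp add: eventually_sequentially)
qed

end
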